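(* Let $p>2$ and $\alpha=pc$ with $c\in\Delta_p^0$. Let $0<a<1$, and let $\xi_1,\xi_2$ be independent random variables with values in $\Delta_p$ with distributions $\mu_1=a\,m_{\Delta_p}+(1-a)\,m_{p\Delta_p}$ and $\mu_2=m_{\Delta_p}$. Then the conditional distribution of $L_2=\xi_1+\alpha\xi_2$ given $L_1=\xi_1+\xi_2$ is symmetric (while $\mu_1$ is not an idempotent distribution).
   Context: $\Delta_p$ is the compact group of $p$-adic integers, $p\Delta_p$ its subgroup of elements divisible by $p$, $\Delta_p^0$ the invertible $p$-adic integers; $\alpha$ acts by multiplication. $m_K$ is the Haar probability measure of a compact subgroup $K$. An idempotent distribution is a shift $m_K*E_x$ of a Haar distribution of a compact subgroup. The conditional distribution of $L_2$ given $L_1$ is symmetric if it equals the conditional distribution of $-L_2$ given $L_1$. *)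

theory Defs
  imports "HOL-Probability.Probability"
begin

text \<open>The p-adic integers are modelled as the inverse limit of the rings Z/p^n Z:
  compatible sequences of residues x n in {0..<p^n}. They live inside the type
  nat => int, which carries the product topology of discrete spaces; its subspace
  topology on the carrier is the p-adic topology, and measures use the Borel sets.\<close>

definition Zp :: "int \<Rightarrow> (nat \<Rightarrow> int) set" where
  "Zp p = {x. \<forall>n. 0 \<le> x n \<and> x n < p ^ n \<and> x (Suc n) mod p ^ n = x n}"

definition padd :: "int \<Rightarrow> (nat \<Rightarrow> int) \<Rightarrow> (nat \<Rightarrow> int) \<Rightarrow> (nat \<Rightarrow> int)" where
  "padd p x y = (\<lambda>n. (x n + y n) mod p ^ n)"

definition pneg :: "int \<Rightarrow> (nat \<Rightarrow> int) \<Rightarrow> (nat \<Rightarrow> int)" where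
  "pneg p x = (\<lambda>n. (- x n) mod p ^ n)"

definition pmult :: "int \<Rightarrow> (nat \<Rightarrow> int) \<Rightarrow> (nat \<Rightarrow> int) \<Rightarrow> (nat \<Rightarrow> int)" where
  "pmult p x y = (\<lambda>n. (x n * y n) mod p ^ n)"

definition pconst :: "int \<Rightarrow> int \<Rightarrow> (nat \<Rightarrow> int)" where
  "pconst p k = (\<lambda>n. k mod p ^ n)"

definition Zp_units :: "int \<Rightarrow> (nat \<Rightarrow> int) set" where
  "Zp_units p = {x \<in> Zp p. \<exists>y \<in> Zp p. pmult p x y = pconst p 1}"

definition pZp :: "int \<Rightarrow> (nat \<Rightarrow> int) set" where
  "pZp p = pmult p (pconst p p) ` Zp p"

definition compact_subgroup :: "int \<Rightarrow> (nat \<Rightarrow> int) set \<Rightarrow> bool" where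
  "compact_subgroup p K \<longleftrightarrow> K \<subseteq> Zp p \<and> compact K \<and> pconst p 0 \<in> K \<and>
     (\<forall>x\<in>K. \<forall>y\<in>K. padd p x y \<in> K) \<and> (\<forall>x\<in>K. pneg p x \<in> K)"

definition is_haar :: "int \<Rightarrow> (nat \<Rightarrow> int) set \<Rightarrow> (nat \<Rightarrow> int) measure \<Rightarrow> bool" where
  "is_haar p K \<nu> \<longleftrightarrow> sets \<nu> = sets borel \<and> prob_space \<nu> \<and> emeasure \<nu> K = 1 \<and>
     (\<forall>x\<in>K. distr \<nu> borel (padd p x) = \<nu>)"

definition idempotent_distr :: "int \<Rightarrow> (nat \<Rightarrow> int) measure \<Rightarrow> bool" where
  "idempotent_distr p \<mu> \<longleftrightarrow> (\<exists>K x \<nu>. compact_subgroup p K \<and> x \<in> Zp p \<and> is_haar p K \<nu> \<and>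
     \<mu> = distr \<nu> borel (padd p x))"

end

theory Submission
  imports Defs
begin

text \<open>
  Everything is decided on the finite levels \<open>Z/p^n\<close>. At level \<open>n\<close>, with \<open>q = p^n\<close>, the pair
  \<open>(L1, L2)\<close> is the image of the independent residues \<open>(x, y)\<close> of \<open>\<xi>1, \<xi>2\<close> under
  \<open>(x, y) \<mapsto> (x + y, x + \<alpha> y)\<close>, a bijection of \<open>(Z/q)\<^sup>2\<close> because \<open>1 - \<alpha>\<close> is a unit; as
  \<open>p\<close> divides \<open>\<alpha>\<close>, the preimage of \<open>(u, v)\<close> has \<open>x \<equiv> v (mod p)\<close>. The level law of \<open>\<xi>2\<close>
  is uniform and that of \<open>\<xi>1\<close> only depends on whether \<open>p\<close> divides the residue, so
  \<open>P(L1 = u, L2 = v)\<close> only depends on \<open>u\<close> and on whether \<open>p\<close> divides \<open>v\<close>, which is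
  invariant under \<open>v \<mapsto> -v\<close>. The law of a sequence-valued random variable is determined by its
  finite levels, hence \<open>(L1, L2)\<close> and \<open>(L1, -L2)\<close> have the same law.

  An idempotent distribution is invariant under shifts by its subgroup, so all its level
  cylinders of positive mass have the same mass; \<open>\<mu>1\<close> gives mass \<open>a/p + 1 - a\<close> to
  \<open>{z. z 1 = 0}\<close> but \<open>a/p\<close> to \<open>{z. z 1 = 1}\<close>.
\<close>

section \<open>p-adic integers as compatible residue sequences\<close>

lemma Zp_bounds: "x \<in> Zp p \<Longrightarrow> 0 \<le> x n \<and> x n < p ^ n"
  by (auto simp: Zp_def)

lemma Zp_Suc_mod: "x \<in> Zp p \<Longrightarrow> x (Suc n) mod p ^ n = x n"
  by (simp add: Zp_def)

lemma Zp_mod_power: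
  assumes "x \<in> Zp p" "j \<le> n"
  shows "x n mod p ^ j = x j"
  using assms(2)
proof (induction n rule: dec_induct)
  case base
  show ?case using Zp_bounds[OF assms(1)] by simp
next
  case (step n)
  have "x (Suc n) mod p ^ j = x (Suc n) mod p ^ n mod p ^ j"
    using step.hyps by (simp add: mod_mod_cancel le_imp_power_dvd)
  also have "\<dots> = x n mod p ^ j" using assms(1) by (simp add: Zp_Suc_mod)
  finally show ?case using step.IH by simp
qed

lemma pconst_Zp: "p > 0 \<Longrightarrow> pconst p k \<in> Zp p"
  by (simp add: Zp_def pconst_def mod_mod_cancel)

lemma padd_Zp:
  assumes "p > 0" "x \<in> Zp p" "y \<in> Zp p"
  shows "padd p x y \<in> Zp p"
proof -
  have "(x (Suc n) + y (Suc n)) mod p ^ n = (x n + y n) mod p ^ n" for n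
    using assms(2,3) by (metis mod_add_eq Zp_Suc_mod)
  then show ?thesis using assms(1) by (simp add: Zp_def padd_def mod_mod_cancel)
qed

lemma pmult_Zp:
  assumes "p > 0" "x \<in> Zp p" "y \<in> Zp p"
  shows "pmult p x y \<in> Zp p"
proof -
  have "(x (Suc n) * y (Suc n)) mod p ^ n = (x n * y n) mod p ^ n" for n
    using assms(2,3) by (metis mod_mult_eq Zp_Suc_mod)
  then show ?thesis using assms(1) by (simp add: Zp_def pmult_def mod_mod_cancel)
qed

lemma pneg_Zp:
  assumes "p > 0" "x \<in> Zp p"
  shows "pneg p x \<in> Zp p"
proof -
  have "(- x (Suc n)) mod p ^ n = (- x n) mod p ^ n" for n
    using assms(2) by (metis mod_minus_eq Zp_Suc_mod)
  then show ?thesis using assms(1) by (simp add: Zp_def pneg_def mod_mod_cancel)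
qed

lemma pZp_subset_Zp: "p > 0 \<Longrightarrow> pZp p \<subseteq> Zp p"
  by (auto simp: pZp_def intro: pmult_Zp pconst_Zp)

lemma pZp_dvd:
  assumes "z \<in> pZp p"
  shows "p dvd z n"
proof (cases n)
  case 0
  then show ?thesis using assms by (auto simp: pZp_def pmult_def)
next
  case Suc
  then have "p dvd p ^ n" by simp
  moreover obtain w where "z = pmult p (pconst p p) w" using assms by (auto simp: pZp_def)
  ultimately show ?thesis by (simp add: pmult_def pconst_def dvd_mod)
qed

lemma padd_left_commute: "padd p x (padd p y z) = padd p y (padd p x z)"
  by (simp add: padd_def mod_add_right_eq add.left_commute)

section \<open>Measurability on sequence spaces\<close>

(* Makes the Borel sets of nat => int the product sigma-algebra (sets_PiM_equal_borel). *)
instance int :: second_countable_topology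
proof
  show "\<exists>B::int set set. countable B \<and> open = generate_topology B"
    by (intro exI[of _ "range lessThan \<union> range greaterThan"]) (auto simp: open_int_def)
qed

lemma measurable_countable_borel:
  "(h :: 'a::{countable, t2_space} \<Rightarrow> 'b) \<in> measurable borel M \<longleftrightarrow> h \<in> UNIV \<rightarrow> space M"
  by (subst measurable_cong_sets[OF sets_borel_eq_count_space refl]) simp

lemma emeasure_distr_borel_singleton:
  fixes f :: "'a \<Rightarrow> 'b::{countable, t2_space}"
  assumes "f \<in> borel_measurable M"
  shows "emeasure (distr M borel f) {w} = emeasure M {x\<in>space M. f x = w}"
proof -
  have "f -` {w} \<inter> space M = {x\<in>space M. f x = w}" by auto
  then show ?thesis using emeasure_distr[OF assms, of "{w}"] by (simp add: sets_borel_eq_count_space)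
qed

lemma coordinate_preimage_borel: "{z :: nat \<Rightarrow> int. z n \<in> A} \<in> sets borel"
proof -
  have "(\<lambda>z::nat\<Rightarrow>int. z n) -` A \<inter> space borel \<in> sets borel"
    by (rule measurable_sets[OF measurable_product_coordinates]) (simp add: sets_borel_eq_count_space)
  then show ?thesis by (simp add: vimage_def)
qed

lemma level_set_borel: "{z :: nat \<Rightarrow> int. z n = x} \<in> sets borel"
  using coordinate_preimage_borel[of n "{x}"] by simp

lemma borel_measurable_padd: "padd p x \<in> borel_measurable borel"
  unfolding padd_def
  by (intro measurable_coordinatewise_then_product measurable_compose[OF measurable_product_coordinates])
     (simp add: measurable_countable_borel)

lemma measurable_padd: "sets \<nu> = sets borel \<Longrightarrow> padd p x \<in> measurable \<nu> borel"
  using borel_measurable_padd measurable_cong_sets by blast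

lemma borel_measurable_levelwise:
  fixes \<xi> \<eta> :: "'w \<Rightarrow> nat \<Rightarrow> int" and h :: "nat \<Rightarrow> int \<Rightarrow> int \<Rightarrow> 'a::second_countable_topology"
  assumes "\<xi> \<in> borel_measurable M" "\<eta> \<in> borel_measurable M"
  shows "(\<lambda>\<omega> n. h n (\<xi> \<omega> n) (\<eta> \<omega> n)) \<in> borel_measurable M"
proof (rule measurable_coordinatewise_then_product)
  fix n
  have "(\<lambda>\<omega>. (\<xi> \<omega> n, \<eta> \<omega> n)) \<in> borel_measurable M"
    by (rule borel_measurable_Pair[OF measurable_compose[OF assms(1) measurable_product_coordinates]
          measurable_compose[OF assms(2) measurable_product_coordinates]])
  from measurable_compose[OF this, of "\<lambda>(x, y). h n x y" borel]
  show "(\<lambda>\<omega>. h n (\<xi> \<omega> n) (\<eta> \<omega> n)) \<in> borel_measurable M"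
    by (simp add: measurable_countable_borel)
qed

lemma emeasure_distr_level_set:
  fixes \<xi> :: "'w \<Rightarrow> nat \<Rightarrow> int"
  assumes "\<xi> \<in> borel_measurable P"
  shows "emeasure (distr P borel (\<lambda>\<omega>. \<xi> \<omega> n)) {x} = emeasure (distr P borel \<xi>) {z. z n = x}"
proof -
  have "\<xi> -` {z. z n = x} \<inter> space P = {\<omega>\<in>space P. \<xi> \<omega> n = x}" by auto
  then show ?thesis
    using emeasure_distr[OF assms level_set_borel]
      emeasure_distr_borel_singleton[OF measurable_compose[OF assms measurable_product_coordinates]]
    by simp
qed

section \<open>Haar measures seen on the finite levels\<close>

lemma level_emeasure_shift:
  fixes \<nu> :: "(nat \<Rightarrow> int) measure"
  assumes sets: "sets \<nu> = sets borel" and inv: "distr \<nu> borel (padd p k) = \<nu>"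
    and range: "AE z in \<nu>. z n \<in> {0..<p ^ n}" and x: "x \<in> {0..<p ^ n}"
  shows "emeasure \<nu> {z. z n = (k n + x) mod p ^ n} = emeasure \<nu> {z. z n = x}"
proof -
  have meas: "padd p k \<in> measurable \<nu> borel" using sets by (rule measurable_padd)
  have "emeasure \<nu> {z. z n = (k n + x) mod p ^ n}
      = emeasure (distr \<nu> borel (padd p k)) {z. z n = (k n + x) mod p ^ n}"
    using inv by simp
  also have "\<dots> = emeasure \<nu> (padd p k -` {z. z n = (k n + x) mod p ^ n} \<inter> space \<nu>)"
    by (rule emeasure_distr[OF meas level_set_borel])
  also have "\<dots> = emeasure \<nu> {z. z n = x}"
  proof (rule emeasure_eq_AE)
    show "AE z in \<nu>. z \<in> padd p k -` {z. z n = (k n + x) mod p ^ n} \<inter> space \<nu> \<longleftrightarrow> z \<in> {z. z n = x}"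
      using range
    proof eventually_elim
      case (elim z)
      have "(k n + z n) mod p ^ n = (k n + x) mod p ^ n \<longleftrightarrow> z n mod p ^ n = x mod p ^ n"
        by (simp add: mod_eq_dvd_iff)
      then show ?case using elim x by (auto simp: padd_def sets_eq_imp_space_eq[OF sets])
    qed
    show "padd p k -` {z. z n = (k n + x) mod p ^ n} \<inter> space \<nu> \<in> sets \<nu>"
      by (rule measurable_sets[OF meas level_set_borel])
    show "{z. z n = x} \<in> sets \<nu>" using level_set_borel sets by simp
  qed
  finally show ?thesis .
qed

lemma is_haar_AE_mem:
  assumes "is_haar p K \<nu>"
  shows "AE z in \<nu>. z \<in> K"
proof -
  have sets: "sets \<nu> = sets borel" and "prob_space \<nu>" and K1: "emeasure \<nu> K = 1"
    using assms by (auto simp: is_haar_def)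
  moreover have "K \<in> sets \<nu>" using K1 emeasure_notin_sets by force
  moreover have "{z \<in> space \<nu>. z \<in> K} = K" using sets_eq_imp_space_eq[OF sets] by auto
  ultimately show ?thesis by (metis prob_space.AE_I_eq_1)
qed

lemma is_haar_level_shift:
  assumes H: "is_haar p K \<nu>" and "K \<subseteq> Zp p" "k \<in> K" "x \<in> {0..<p ^ n}"
  shows "emeasure \<nu> {z. z n = (k n + x) mod p ^ n} = emeasure \<nu> {z. z n = x}"
proof (rule level_emeasure_shift)
  show "AE z in \<nu>. z n \<in> {0..<p ^ n}"
    using is_haar_AE_mem[OF H] by eventually_elim (use assms(2) Zp_bounds in fastforce)
qed (use assms in \<open>auto simp: is_haar_def\<close>)

lemma haar_Zp_level_eq:
  assumes H: "is_haar p (Zp p) \<nu>" and p: "p > 0" and x: "x \<in> {0..<p ^ n}" and x': "x' \<in> {0..<p ^ n}"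
  shows "emeasure \<nu> {z. z n = x} = emeasure \<nu> {z. z n = x'}"
proof -
  have "x' = (pconst p (x' - x) n + x) mod p ^ n"
    using x' by (simp add: pconst_def mod_add_left_eq)
  then show ?thesis
    using is_haar_level_shift[OF H order_refl pconst_Zp[OF p, of "x' - x"] x] by simp
qed

lemma haar_Zp_level_pos:
  assumes H: "is_haar p (Zp p) \<nu>" and p: "p > 0" and x: "x \<in> {0..<p ^ n}"
  shows "emeasure \<nu> {z. z n = x} > 0"
proof (rule ccontr)
  assume "\<not> ?thesis"
  then have null: "emeasure \<nu> {z. z n = y} = 0" if "y \<in> {0..<p ^ n}" for y
    using haar_Zp_level_eq[OF H p that x] by simp
  have sets: "sets \<nu> = sets borel" and Zp1: "emeasure \<nu> (Zp p) = 1"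
    using H by (auto simp: is_haar_def)
  have "Zp p \<subseteq> (\<Union>y\<in>{0..<p ^ n}. {z. z n = y})" using Zp_bounds by fastforce
  then have "emeasure \<nu> (Zp p) \<le> emeasure \<nu> (\<Union>y\<in>{0..<p ^ n}. {z. z n = y})"
    by (intro emeasure_mono) (auto simp: sets level_set_borel)
  also have "\<dots> \<le> (\<Sum>y\<in>{0..<p ^ n}. emeasure \<nu> {z. z n = y})"
    by (rule emeasure_subadditive_finite) (auto simp: sets level_set_borel)
  also have "\<dots> = 0" using null by simp
  finally show False using Zp1 by simp
qed

lemma haar_pZp_level_not_dvd:
  assumes H: "is_haar p (pZp p) \<nu>" and x: "\<not> p dvd x"
  shows "emeasure \<nu> {z. z n = x} = 0"
proof -
  have sets: "sets \<nu> = sets borel" using H by (simp add: is_haar_def)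
  have "emeasure \<nu> {z. z n = x} = emeasure \<nu> {}"
  proof (rule emeasure_eq_AE)
    show "AE z in \<nu>. z \<in> {z. z n = x} \<longleftrightarrow> z \<in> {}"
      using is_haar_AE_mem[OF H] by eventually_elim (use x pZp_dvd in blast)
  qed (auto simp: sets level_set_borel)
  then show ?thesis by simp
qed

lemma haar_pZp_level_eq:
  assumes H: "is_haar p (pZp p) \<nu>" and p: "p > 0"
    and x: "x \<in> {0..<p ^ n}" "p dvd x" and x': "x' \<in> {0..<p ^ n}" "p dvd x'"
  shows "emeasure \<nu> {z. z n = x} = emeasure \<nu> {z. z n = x'}"
proof -
  obtain m m' where m: "x = p * m" and m': "x' = p * m'" using x(2) x'(2) by blast
  define k where "k = pmult p (pconst p p) (pconst p (m' - m))"
  have k: "k \<in> pZp p" unfolding k_def pZp_def using pconst_Zp[OF p] by blast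
  have "(k n + x) mod p ^ n = (p * (m' - m) + p * m) mod p ^ n"
    by (simp add: k_def pmult_def pconst_def m mod_simps)
  also have "\<dots> = x'" using x' by (simp add: m' algebra_simps)
  finally show ?thesis
    using is_haar_level_shift[OF H pZp_subset_Zp[OF p] k x(1)] by simp
qed

lemma haar_pZp_level1_zero:
  assumes H: "is_haar p (pZp p) \<nu>" and p: "p > 1"
  shows "emeasure \<nu> {z. z 1 = 0} = 1"
proof -
  have zero: "z 1 = 0" if "z \<in> pZp p" for z
  proof -
    have "0 \<le> z 1" "z 1 < p" using Zp_bounds[of z p 1] pZp_subset_Zp[of p] that p by auto
    then show ?thesis using pZp_dvd[OF that] by (metis order_le_less zdvd_not_zless)
  qed
  have "AE z in \<nu>. z \<in> {z. z 1 = 0}"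
    using is_haar_AE_mem[OF H] by eventually_elim (use zero in blast)
  then show ?thesis
    using H level_set_borel by (auto simp: is_haar_def intro: prob_space.emeasure_eq_1_AE)
qed

lemma haar_mixture_level_eq:
  assumes HD: "is_haar p (Zp p) mD" and HpD: "is_haar p (pZp p) mpD" and p: "p > 0"
    and \<mu>: "\<forall>A\<in>sets borel. emeasure \<mu> A = ennreal a * emeasure mD A + ennreal (1 - a) * emeasure mpD A"
    and x: "x \<in> {0..<p ^ n}" and x': "x' \<in> {0..<p ^ n}" and dvd: "p dvd x \<longleftrightarrow> p dvd x'"
  shows "emeasure \<mu> {z. z n = x} = emeasure \<mu> {z. z n = x'}"
proof -
  have "emeasure mpD {z. z n = x} = emeasure mpD {z. z n = x'}"
    using haar_pZp_level_eq[OF HpD p x _ x'] haar_pZp_level_not_dvd[OF HpD] dvd by metis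
  then show ?thesis
    using \<mu> haar_Zp_level_eq[OF HD p x x'] level_set_borel by simp
qed

section \<open>Idempotent distributions\<close>

lemma shifted_haar_shift_invariant:
  assumes H: "is_haar p K \<nu>" and k: "k \<in> K"
  shows "distr (distr \<nu> borel (padd p x0)) borel (padd p k) = distr \<nu> borel (padd p x0)"
proof -
  have sets: "sets \<nu> = sets borel" and inv: "distr \<nu> borel (padd p k) = \<nu>"
    using H k by (auto simp: is_haar_def)
  have "distr (distr \<nu> borel (padd p x0)) borel (padd p k) = distr \<nu> borel (padd p k \<circ> padd p x0)"
    by (rule distr_distr[OF borel_measurable_padd measurable_padd[OF sets]])
  also have "padd p k \<circ> padd p x0 = padd p x0 \<circ> padd p k"
    by (simp add: fun_eq_iff padd_left_commute)
  also have "distr \<nu> borel (padd p x0 \<circ> padd p k) = distr (distr \<nu> borel (padd p k)) borel (padd p x0)"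
    by (rule distr_distr[OF borel_measurable_padd measurable_padd[OF sets], symmetric])
  finally show ?thesis unfolding inv .
qed

lemma shifted_haar_level_pos_imp_ex:
  assumes H: "is_haar p K \<nu>" and pos: "emeasure (distr \<nu> borel (padd p x0)) {z. z n = t} > 0"
  shows "\<exists>k\<in>K. (x0 n + k n) mod p ^ n = t"
proof (rule ccontr)
  assume miss: "\<not> ?thesis"
  have meas: "padd p x0 \<in> measurable \<nu> borel"
    using H by (intro measurable_padd) (simp add: is_haar_def)
  have "emeasure (distr \<nu> borel (padd p x0)) {z. z n = t} = emeasure \<nu> (padd p x0 -` {z. z n = t} \<inter> space \<nu>)"
    by (rule emeasure_distr[OF meas level_set_borel])
  also have "\<dots> = emeasure \<nu> {}"
  proof (rule emeasure_eq_AE)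
    show "AE z in \<nu>. z \<in> padd p x0 -` {z. z n = t} \<inter> space \<nu> \<longleftrightarrow> z \<in> {}"
      using is_haar_AE_mem[OF H] by eventually_elim (use miss in \<open>auto simp: padd_def\<close>)
  qed (use measurable_sets[OF meas level_set_borel] in auto)
  finally show False using pos by simp
qed

lemma idempotent_distr_level_eq:
  assumes idem: "idempotent_distr p \<mu>" and p: "p > 0"
    and r: "r \<in> {0..<p ^ n}"
    and pos: "emeasure \<mu> {z. z n = r} > 0" "emeasure \<mu> {z. z n = s} > 0"
  shows "emeasure \<mu> {z. z n = r} = emeasure \<mu> {z. z n = s}"
proof -
  obtain K x0 \<nu> where K: "compact_subgroup p K" and H: "is_haar p K \<nu>"
    and \<mu>: "\<mu> = distr \<nu> borel (padd p x0)"
    using idem by (auto simp: idempotent_distr_def)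
  obtain k0 k1 where k0: "k0 \<in> K" "(x0 n + k0 n) mod p ^ n = r"
    and k1: "k1 \<in> K" "(x0 n + k1 n) mod p ^ n = s"
    using shifted_haar_level_pos_imp_ex[OF H] pos unfolding \<mu> by blast
  define k where "k = padd p k1 (pneg p k0)"
  have k: "k \<in> K" using K k0(1) k1(1) by (simp add: k_def compact_subgroup_def)
  have "k n = (k1 n - k0 n) mod p ^ n" by (simp add: k_def padd_def pneg_def mod_add_right_eq)
  then have "(k n + r) mod p ^ n = (k1 n - k0 n + (x0 n + k0 n)) mod p ^ n"
    by (simp only: k0(2)[symmetric] mod_add_eq)
  also have "k1 n - k0 n + (x0 n + k0 n) = x0 n + k1 n" by simp
  finally have s_eq: "s = (k n + r) mod p ^ n" using k1(2) by simp
  have sets: "sets \<nu> = sets borel" using H by (simp add: is_haar_def)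
  have "AE z in \<nu>. padd p x0 z n \<in> {0..<p ^ n}" using p by (simp add: padd_def)
  then have "AE z in \<mu>. z n \<in> {0..<p ^ n}"
    unfolding \<mu> by (subst AE_distr_iff[OF measurable_padd[OF sets]]) (simp_all add: coordinate_preimage_borel)
  moreover have "sets \<mu> = sets borel" by (simp add: \<mu>)
  ultimately show ?thesis
    using level_emeasure_shift[of \<mu> p k n r] shifted_haar_shift_invariant[OF H k] \<mu> r s_eq by simp
qed

lemma haar_mixture_not_idempotent_distr:
  assumes p: "p > 1" and a: "0 < a" "a < 1"
    and HD: "is_haar p (Zp p) mD" and HpD: "is_haar p (pZp p) mpD"
    and \<mu>: "\<forall>A\<in>sets borel. emeasure \<mu> A = ennreal a * emeasure mD A + ennreal (1 - a) * emeasure mpD A"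
  shows "\<not> idempotent_distr p \<mu>"
proof
  assume idem: "idempotent_distr p \<mu>"
  define m where "m = emeasure mD {z. z 1 = 0}"
  have range: "0 \<in> {0..<p ^ 1}" "1 \<in> {0..<p ^ 1}" using p by auto
  have m_pos: "m > 0" unfolding m_def using haar_Zp_level_pos[OF HD _ range(1)] p by simp
  have "prob_space mD" using HD by (simp add: is_haar_def)
  then have m_fin: "m \<noteq> \<top>"
    unfolding m_def by (rule finite_measure.emeasure_finite[OF prob_space.axioms(1)])
  have mD1: "emeasure mD {z. z 1 = 1} = m"
    unfolding m_def using haar_Zp_level_eq[OF HD _ range(2,1)] p by simp
  have mpD1: "emeasure mpD {z. z 1 = 1} = 0"
    using haar_pZp_level_not_dvd[OF HpD] p by (simp add: zdvd_not_zless)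
  have mpD0: "emeasure mpD {z. z 1 = 0} = 1" by (rule haar_pZp_level1_zero[OF HpD p])
  have \<mu>1: "emeasure \<mu> {z. z 1 = 1} = ennreal a * m"
    using \<mu> level_set_borel mD1 mpD1 by simp
  have \<mu>0: "emeasure \<mu> {z. z 1 = 0} = ennreal a * m + ennreal (1 - a)"
    using \<mu> level_set_borel mpD0 by (simp add: m_def)
  have "emeasure \<mu> {z. z 1 = 0} = emeasure \<mu> {z. z 1 = 1}"
  proof (rule idempotent_distr_level_eq[OF idem _ range(1)])
    show "emeasure \<mu> {z. z 1 = 0} > 0" unfolding \<mu>0 using a by (intro add_nonneg_pos) simp_all
    show "emeasure \<mu> {z. z 1 = 1} > 0" unfolding \<mu>1 using a m_pos by (simp add: ennreal_zero_less_mult_iff)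
  qed (use p in simp)
  then have "ennreal a * m + ennreal (1 - a) = ennreal a * m + 0" unfolding \<mu>0 \<mu>1 by simp
  moreover have "ennreal a * m \<noteq> \<top>" using m_fin by (simp add: ennreal_mult_eq_top_iff)
  ultimately show False using a by (simp add: ennreal_add_left_cancel)
qed

section \<open>Linear images of residue pairs\<close>

lemma coprime_prime_power_one_minus:
  fixes p A :: int
  assumes p: "prime p" and A: "p dvd A"
  shows "coprime (p ^ n) (1 - A)"
proof -
  have "\<not> p dvd 1 - A"
  proof
    assume "p dvd 1 - A"
    then have "p dvd (1 - A) + A" using A by (rule dvd_add)
    then have "p dvd 1" by simp
    from not_prime_unit[OF this] p show False by contradiction
  qed
  then show ?thesis using p by (simp add: prime_imp_coprime)
qed

lemma residue_pair_map_bij: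
  fixes p A :: int
  assumes p: "prime p" and A: "p dvd A"
  shows "bij_betw (\<lambda>(x, y). ((x + y) mod p ^ n, (x + A * y) mod p ^ n))
           ({0..<p ^ n} \<times> {0..<p ^ n}) ({0..<p ^ n} \<times> {0..<p ^ n})"
    (is "bij_betw ?F (?R \<times> ?R) _")
proof -
  have q: "p ^ n > 0" using p by (simp add: prime_gt_0_int)
  have cop: "coprime (p ^ n) (1 - A)" by (rule coprime_prime_power_one_minus[OF p A])
  have eq_if_dvd: "a = b" if "a \<in> ?R" "b \<in> ?R" "p ^ n dvd a - b" for a b
  proof -
    have "a mod p ^ n = b mod p ^ n" using that(3) by (simp add: mod_eq_dvd_iff)
    then show ?thesis using that(1,2) by simp
  qed
  have inj: "x = x' \<and> y = y'"
    if xy: "x \<in> ?R" "y \<in> ?R" "x' \<in> ?R" "y' \<in> ?R" and "?F (x, y) = ?F (x', y')" for x y x' y'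
  proof -
    have d1: "p ^ n dvd (x + y) - (x' + y')" and d2: "p ^ n dvd (x + A * y) - (x' + A * y')"
      using that(5) by (simp_all add: mod_eq_dvd_iff)
    have "(x + y) - (x' + y') - ((x + A * y) - (x' + A * y')) = (1 - A) * (y - y')"
      by (simp add: algebra_simps)
    then have "p ^ n dvd (1 - A) * (y - y')" using dvd_diff[OF d1 d2] by simp
    then have "p ^ n dvd y - y'" by (simp only: coprime_dvd_mult_right_iff[OF cop])
    then have "y = y'" using xy eq_if_dvd by simp
    moreover from this have "x = x'" using d1 xy eq_if_dvd by simp
    ultimately show ?thesis by simp
  qed
  have "inj_on ?F (?R \<times> ?R)"
  proof (rule inj_onI)
    fix a b assume ab: "a \<in> ?R \<times> ?R" "b \<in> ?R \<times> ?R" "?F a = ?F b"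
    obtain x y x' y' where "a = (x, y)" "b = (x', y')" by (cases a, cases b)
    then show "a = b" using inj[of x y x' y'] ab by auto
  qed
  moreover have "?F ` (?R \<times> ?R) \<subseteq> ?R \<times> ?R" using q by auto
  ultimately show ?thesis by (simp add: bij_betw_def endo_inj_surj)
qed

lemma neg_mod_eq_iff:
  fixes s v q :: int
  assumes "v \<in> {0..<q}"
  shows "(- s) mod q = v \<longleftrightarrow> s mod q = (- v) mod q"
proof -
  have "(- s) mod q = v \<longleftrightarrow> (- s) mod q = v mod q" using assms by simp
  also have "\<dots> \<longleftrightarrow> q dvd - (s + v)" by (simp add: mod_eq_dvd_iff)
  also have "\<dots> \<longleftrightarrow> q dvd s + v" by (rule dvd_minus_iff)
  also have "\<dots> \<longleftrightarrow> s mod q = (- v) mod q" by (simp add: mod_eq_dvd_iff)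
  finally show ?thesis .
qed

lemma (in prob_space) indep_var_emeasure_Times:
  assumes "indep_var S X T Y" "A \<in> sets S" "B \<in> sets T"
  shows "emeasure M ((\<lambda>\<omega>. (X \<omega>, Y \<omega>)) -` (A \<times> B) \<inter> space M)
    = emeasure (distr M S X) A * emeasure (distr M T Y) B"
  using assms indep_var_rv1[OF assms(1)] indep_var_rv2[OF assms(1)]
  by (simp add: emeasure_distr emeasure_eq_measure indep_varD ennreal_mult)

lemma residue_pair_point_law:
  fixes X Y :: "'w \<Rightarrow> int" and A :: int
  assumes P: "prob_space P" and p: "prime p" and A: "p dvd A" and n: "n \<ge> 1"
    and indep: "prob_space.indep_var P borel X borel Y"
    and range: "\<forall>\<omega>\<in>space P. X \<omega> \<in> {0..<p ^ n} \<and> Y \<omega> \<in> {0..<p ^ n}"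
    and law_X: "\<And>x x'. x \<in> {0..<p ^ n} \<Longrightarrow> x' \<in> {0..<p ^ n} \<Longrightarrow> (p dvd x \<longleftrightarrow> p dvd x') \<Longrightarrow>
      emeasure (distr P borel X) {x} = emeasure (distr P borel X) {x'}"
    and law_Y: "\<And>y y'. y \<in> {0..<p ^ n} \<Longrightarrow> y' \<in> {0..<p ^ n} \<Longrightarrow>
      emeasure (distr P borel Y) {y} = emeasure (distr P borel Y) {y'}"
    and u: "u \<in> {0..<p ^ n}" and v: "v \<in> {0..<p ^ n}"
  shows "emeasure P {\<omega>\<in>space P. ((X \<omega> + Y \<omega>) mod p ^ n, (X \<omega> + A * Y \<omega>) mod p ^ n) = (u, v)}
    = emeasure (distr P borel X) {if p dvd v then 0 else 1} * emeasure (distr P borel Y) {0}"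
proof -
  interpret P: prob_space P by fact
  let ?R = "{0..<p ^ n}" and ?F = "\<lambda>(x, y). ((x + y) mod p ^ n, (x + A * y) mod p ^ n)"
  have bij: "bij_betw ?F (?R \<times> ?R) (?R \<times> ?R)" by (rule residue_pair_map_bij[OF p A])
  have inj: "inj_on ?F (?R \<times> ?R)" using bij by (rule bij_betw_imp_inj_on)
  have "(u, v) \<in> ?F ` (?R \<times> ?R)" using bij u v by (simp add: bij_betw_def)
  then obtain z where z: "z \<in> ?R \<times> ?R" "?F z = (u, v)" by (rule imageE) simp
  obtain x0 y0 where "z = (x0, y0)" by (cases z)
  with z have xy0: "(x0, y0) \<in> ?R \<times> ?R" and F0: "?F (x0, y0) = (u, v)" by (simp_all only:)
  have "?F (X \<omega>, Y \<omega>) = (u, v) \<longleftrightarrow> (X \<omega>, Y \<omega>) = (x0, y0)" if "\<omega> \<in> space P" for \<omega>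
  proof -
    have "(X \<omega>, Y \<omega>) \<in> ?R \<times> ?R" using range that by blast
    from inj_on_eq_iff[OF inj this xy0] show ?thesis unfolding F0 .
  qed
  then have "{\<omega>\<in>space P. ?F (X \<omega>, Y \<omega>) = (u, v)}
      = (\<lambda>\<omega>. (X \<omega>, Y \<omega>)) -` ({x0} \<times> {y0}) \<inter> space P"
    by blast
  then have "emeasure P {\<omega>\<in>space P. ?F (X \<omega>, Y \<omega>) = (u, v)}
      = emeasure (distr P borel X) {x0} * emeasure (distr P borel Y) {y0}"
    using P.indep_var_emeasure_Times[OF indep, of "{x0}" "{y0}"] by (simp add: sets_borel_eq_count_space)
  moreover have "p dvd x0 \<longleftrightarrow> p dvd v"
  proof -
    have "p dvd p ^ n" using n by (simp add: dvd_power)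
    then have "p dvd v \<longleftrightarrow> p dvd x0 + A * y0" using F0 by (auto simp: dvd_mod_iff)
    then show ?thesis using A by (simp add: dvd_add_left_iff)
  qed
  moreover have "p > 1" using p by (simp add: prime_gt_1_int)
  then have "(if p dvd v then 0 else 1) \<in> ?R" using n by (simp add: one_less_power)
  ultimately show ?thesis
    using law_X[of x0 "if p dvd v then 0 else 1"] law_Y[of y0 0] xy0 \<open>p > 1\<close>
    by (simp add: zdvd_not_zless)
qed

lemma residue_pair_law_symmetric:
  fixes X Y :: "'w \<Rightarrow> int" and A :: int
  assumes P: "prob_space P" and p: "prime p" and A: "p dvd A"
    and indep: "prob_space.indep_var P borel X borel Y"
    and range: "\<forall>\<omega>\<in>space P. X \<omega> \<in> {0..<p ^ n} \<and> Y \<omega> \<in> {0..<p ^ n}"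
    and law_X: "\<And>x x'. x \<in> {0..<p ^ n} \<Longrightarrow> x' \<in> {0..<p ^ n} \<Longrightarrow> (p dvd x \<longleftrightarrow> p dvd x') \<Longrightarrow>
      emeasure (distr P borel X) {x} = emeasure (distr P borel X) {x'}"
    and law_Y: "\<And>y y'. y \<in> {0..<p ^ n} \<Longrightarrow> y' \<in> {0..<p ^ n} \<Longrightarrow>
      emeasure (distr P borel Y) {y} = emeasure (distr P borel Y) {y'}"
  shows "distr P borel (\<lambda>\<omega>. ((X \<omega> + Y \<omega>) mod p ^ n, (X \<omega> + A * Y \<omega>) mod p ^ n))
       = distr P borel (\<lambda>\<omega>. ((X \<omega> + Y \<omega>) mod p ^ n, (- (X \<omega> + A * Y \<omega>)) mod p ^ n))"
    (is "distr P borel ?L = distr P borel ?L'")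
proof (cases "n = 0")
  case False
  interpret P: prob_space P by fact
  let ?R = "{0..<p ^ n}"
  have n: "n \<ge> 1" using False by simp
  have q: "p ^ n > 0" and pq: "p dvd p ^ n" using p n by (simp_all add: prime_gt_0_int dvd_power)
  have pair: "(\<lambda>\<omega>. (X \<omega>, Y \<omega>)) \<in> borel_measurable P"
    using P.indep_var_rv1[OF indep] P.indep_var_rv2[OF indep] by (rule borel_measurable_Pair)
  have meas: "?L \<in> borel_measurable P" "?L' \<in> borel_measurable P"
    using measurable_compose[OF pair, of "\<lambda>(x, y). ((x + y) mod p ^ n, (x + A * y) mod p ^ n)" borel]
      measurable_compose[OF pair, of "\<lambda>(x, y). ((x + y) mod p ^ n, (- (x + A * y)) mod p ^ n)" borel]
    by (simp_all add: measurable_countable_borel)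
  have point: "emeasure P {\<omega>\<in>space P. ?L \<omega> = (u, v)}
      = emeasure (distr P borel X) {if p dvd v then 0 else 1} * emeasure (distr P borel Y) {0}"
    if "u \<in> ?R" "v \<in> ?R" for u v
    using residue_pair_point_law[OF P p A n indep range law_X law_Y that] .
  show ?thesis
  proof (rule measure_eqI_countable[where A = UNIV])
    fix w :: "int \<times> int"
    obtain u v where w: "w = (u, v)" by (cases w)
    have "emeasure (distr P borel ?L) {w} = emeasure P {\<omega>\<in>space P. ?L \<omega> = (u, v)}"
      unfolding w by (rule emeasure_distr_borel_singleton[OF meas(1)])
    also have "\<dots> = emeasure P {\<omega>\<in>space P. ?L' \<omega> = (u, v)}"
    proof (cases "u \<in> ?R \<and> v \<in> ?R")
      case True
      then have v: "v \<in> ?R" by blast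
      have "?L' \<omega> = (u, v) \<longleftrightarrow> ?L \<omega> = (u, (- v) mod p ^ n)" for \<omega>
        by (simp only: prod.inject neg_mod_eq_iff[OF v])
      moreover have "p dvd (- v) mod p ^ n \<longleftrightarrow> p dvd v" using pq by (simp add: dvd_mod_iff)
      ultimately show ?thesis using point True q by simp
    next
      case False
      then have "{\<omega>\<in>space P. ?L \<omega> = (u, v)} = {}" "{\<omega>\<in>space P. ?L' \<omega> = (u, v)} = {}"
        using q by auto
      then show ?thesis by (simp only:)
    qed
    also have "\<dots> = emeasure (distr P borel ?L') {w}"
      unfolding w by (rule emeasure_distr_borel_singleton[OF meas(2), symmetric])
    finally show "emeasure (distr P borel ?L) {w} = emeasure (distr P borel ?L') {w}" .
  qed (simp_all add: sets_borel_eq_count_space)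
qed simp

section \<open>Laws determined by finite levels\<close>

lemma distr_eq_if_level_distr_eq:
  fixes Z W :: "'w \<Rightarrow> nat \<Rightarrow> 'a::{countable, t2_space, second_countable_topology}"
  assumes P: "prob_space P" and Z: "Z \<in> borel_measurable P" and W: "W \<in> borel_measurable P"
    and Z_restrict: "\<And>\<omega> j n. \<omega> \<in> space P \<Longrightarrow> j \<le> n \<Longrightarrow> Z \<omega> j = r j n (Z \<omega> n)"
    and W_restrict: "\<And>\<omega> j n. \<omega> \<in> space P \<Longrightarrow> j \<le> n \<Longrightarrow> W \<omega> j = r j n (W \<omega> n)"
    and level: "\<And>n. distr P borel (\<lambda>\<omega>. Z \<omega> n) = distr P borel (\<lambda>\<omega>. W \<omega> n)"
  shows "distr P borel Z = distr P borel W"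
proof (rule measure_eqI_PiM_infinite[where I = UNIV and M = "\<lambda>_. borel"])
  show "sets (distr P borel Z) = sets (Pi\<^sub>M UNIV (\<lambda>_. borel))"
    and "sets (distr P borel W) = sets (Pi\<^sub>M UNIV (\<lambda>_. borel))"
    by (simp_all add: sets_PiM_equal_borel)
  show "finite_measure (distr P borel Z)"
    using prob_space.prob_space_distr[OF P Z] by (simp add: prob_space_def)
next
  fix J :: "nat set" and A :: "nat \<Rightarrow> 'a set"
  assume J: "finite J"
  define n where "n = Max (insert 0 J)"
  have jn: "j \<le> n" if "j \<in> J" for j using J that by (simp add: n_def)
  let ?C = "prod_emb UNIV (\<lambda>_. borel) J (Pi\<^sub>E J A)"
  have C: "?C = {f. \<forall>j\<in>J. f j \<in> A j}" by (auto simp: prod_emb_def PiE_iff space_PiM)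
  have C_sets: "?C \<in> sets borel"
    using sets_PiM_I[where I = UNIV and M = "\<lambda>_. borel" and E = A, OF J]
    by (simp add: sets_PiM_equal_borel sets_borel_eq_count_space)
  have "emeasure (distr P borel V) ?C = emeasure (distr P borel (\<lambda>\<omega>. V \<omega> n)) {z. \<forall>j\<in>J. r j n z \<in> A j}"
    if V: "V \<in> borel_measurable P"
      and V_restrict: "\<And>\<omega> j. \<omega> \<in> space P \<Longrightarrow> j \<le> n \<Longrightarrow> V \<omega> j = r j n (V \<omega> n)"
    for V :: "'w \<Rightarrow> nat \<Rightarrow> 'a"
  proof -
    have Vn: "(\<lambda>\<omega>. V \<omega> n) \<in> borel_measurable P"
      using measurable_compose[OF V measurable_product_coordinates] .
    have "(\<forall>j\<in>J. V \<omega> j \<in> A j) \<longleftrightarrow> (\<forall>j\<in>J. r j n (V \<omega> n) \<in> A j)" if "\<omega> \<in> space P" for \<omega>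
      using V_restrict[OF that] jn by (metis (no_types, lifting))
    then have "V -` ?C \<inter> space P = (\<lambda>\<omega>. V \<omega> n) -` {z. \<forall>j\<in>J. r j n z \<in> A j} \<inter> space P"
      unfolding C by blast
    then show ?thesis
      using emeasure_distr[OF V C_sets] emeasure_distr[OF Vn, of "{z. \<forall>j\<in>J. r j n z \<in> A j}"]
      by (simp add: sets_borel_eq_count_space)
  qed
  from this[OF Z Z_restrict] this[OF W W_restrict] level[of n]
  show "emeasure (distr P borel Z) ?C = emeasure (distr P borel W) ?C" by simp
qed

lemma distr_pair_eq_if_distr_zip_eq:
  fixes f g f' g' :: "'w \<Rightarrow> nat \<Rightarrow> 'a::second_countable_topology"
  assumes "f \<in> borel_measurable P" "g \<in> borel_measurable P" "f' \<in> borel_measurable P" "g' \<in> borel_measurable P"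
    and zip_eq: "distr P borel (\<lambda>\<omega> n. (f \<omega> n, g \<omega> n)) = distr P borel (\<lambda>\<omega> n. (f' \<omega> n, g' \<omega> n))"
  shows "distr P borel (\<lambda>\<omega>. (f \<omega>, g \<omega>)) = distr P borel (\<lambda>\<omega>. (f' \<omega>, g' \<omega>))"
proof -
  define unzip :: "(nat \<Rightarrow> 'a \<times> 'a) \<Rightarrow> (nat \<Rightarrow> 'a) \<times> (nat \<Rightarrow> 'a)"
    where "unzip w = (\<lambda>n. fst (w n), \<lambda>n. snd (w n))" for w
  have fst: "fst \<in> borel_measurable (borel :: ('a \<times> 'a) measure)"
    and snd: "snd \<in> borel_measurable (borel :: ('a \<times> 'a) measure)"
    using measurable_fst[of "borel :: 'a measure" "borel :: 'a measure", unfolded borel_prod]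
      measurable_snd[of "borel :: 'a measure" "borel :: 'a measure", unfolded borel_prod] by simp_all
  have unzip: "unzip \<in> borel_measurable borel"
    unfolding unzip_def
    by (intro borel_measurable_Pair measurable_coordinatewise_then_product
        measurable_compose[OF measurable_product_coordinates fst]
        measurable_compose[OF measurable_product_coordinates snd])
  have zip: "(\<lambda>\<omega> n. (u \<omega> n, v \<omega> n)) \<in> borel_measurable P"
    if "u \<in> borel_measurable P" "v \<in> borel_measurable P" for u v :: "'w \<Rightarrow> nat \<Rightarrow> 'a"
    by (intro measurable_coordinatewise_then_product borel_measurable_Pair
        measurable_compose[OF that(1) measurable_product_coordinates]
        measurable_compose[OF that(2) measurable_product_coordinates])
  have "distr P borel (\<lambda>\<omega>. (u \<omega>, v \<omega>)) = distr (distr P borel (\<lambda>\<omega> n. (u \<omega> n, v \<omega> n))) borel unzip"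
    if "u \<in> borel_measurable P" "v \<in> borel_measurable P" for u v :: "'w \<Rightarrow> nat \<Rightarrow> 'a"
    using distr_distr[OF unzip zip[OF that]] by (simp add: comp_def unzip_def)
  then show ?thesis using assms by simp
qed

lemma haar_mixture_level_law_symmetric:
  fixes P :: "'w measure" and \<xi>1 \<xi>2 :: "'w \<Rightarrow> nat \<Rightarrow> int"
  assumes p: "prime p" and A: "p dvd A"
    and P: "prob_space P" and m1: "\<xi>1 \<in> borel_measurable P" and m2: "\<xi>2 \<in> borel_measurable P"
    and r1: "\<forall>\<omega>\<in>space P. \<xi>1 \<omega> \<in> Zp p" and r2: "\<forall>\<omega>\<in>space P. \<xi>2 \<omega> \<in> Zp p"
    and indep: "prob_space.indep_var P borel \<xi>1 borel \<xi>2"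
    and HD: "is_haar p (Zp p) mD" and HpD: "is_haar p (pZp p) mpD"
    and \<mu>1: "\<forall>A\<in>sets borel. emeasure (distr P borel \<xi>1) A
           = ennreal a * emeasure mD A + ennreal (1 - a) * emeasure mpD A"
    and \<mu>2: "distr P borel \<xi>2 = mD"
  shows "distr P borel (\<lambda>\<omega>. ((\<xi>1 \<omega> n + \<xi>2 \<omega> n) mod p ^ n, (\<xi>1 \<omega> n + A * \<xi>2 \<omega> n) mod p ^ n))
       = distr P borel (\<lambda>\<omega>. ((\<xi>1 \<omega> n + \<xi>2 \<omega> n) mod p ^ n, (- (\<xi>1 \<omega> n + A * \<xi>2 \<omega> n)) mod p ^ n))"
proof (rule residue_pair_law_symmetric[OF P p A])
  have p0: "p > 0" using p by (simp add: prime_gt_0_int)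
  show "prob_space.indep_var P borel (\<lambda>\<omega>. \<xi>1 \<omega> n) borel (\<lambda>\<omega>. \<xi>2 \<omega> n)"
    using prob_space.indep_var_compose[OF P indep measurable_product_coordinates measurable_product_coordinates]
    by (simp add: comp_def)
  show "\<forall>\<omega>\<in>space P. \<xi>1 \<omega> n \<in> {0..<p ^ n} \<and> \<xi>2 \<omega> n \<in> {0..<p ^ n}"
    using r1 r2 Zp_bounds by fastforce
  show "emeasure (distr P borel (\<lambda>\<omega>. \<xi>1 \<omega> n)) {x} = emeasure (distr P borel (\<lambda>\<omega>. \<xi>1 \<omega> n)) {x'}"
    if "x \<in> {0..<p ^ n}" "x' \<in> {0..<p ^ n}" "p dvd x \<longleftrightarrow> p dvd x'" for x x'
    unfolding emeasure_distr_level_set[OF m1] by (rule haar_mixture_level_eq[OF HD HpD p0 \<mu>1 that])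
  show "emeasure (distr P borel (\<lambda>\<omega>. \<xi>2 \<omega> n)) {y} = emeasure (distr P borel (\<lambda>\<omega>. \<xi>2 \<omega> n)) {y'}"
    if "y \<in> {0..<p ^ n}" "y' \<in> {0..<p ^ n}" for y y'
    unfolding emeasure_distr_level_set[OF m2] \<mu>2 by (rule haar_Zp_level_eq[OF HD p0 that])
qed

lemma haar_mixture_pair_law_symmetric:
  fixes P :: "'w measure" and \<xi>1 \<xi>2 :: "'w \<Rightarrow> nat \<Rightarrow> int"
  assumes p: "prime p" and \<alpha>: "\<alpha> \<in> pZp p"
    and P: "prob_space P" and m1: "\<xi>1 \<in> borel_measurable P" and m2: "\<xi>2 \<in> borel_measurable P"
    and r1: "\<forall>\<omega>\<in>space P. \<xi>1 \<omega> \<in> Zp p" and r2: "\<forall>\<omega>\<in>space P. \<xi>2 \<omega> \<in> Zp p"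
    and indep: "prob_space.indep_var P borel \<xi>1 borel \<xi>2"
    and HD: "is_haar p (Zp p) mD" and HpD: "is_haar p (pZp p) mpD"
    and \<mu>1: "\<forall>A\<in>sets borel. emeasure (distr P borel \<xi>1) A
           = ennreal a * emeasure mD A + ennreal (1 - a) * emeasure mpD A"
    and \<mu>2: "distr P borel \<xi>2 = mD"
  shows "distr P borel (\<lambda>\<omega>. (padd p (\<xi>1 \<omega>) (\<xi>2 \<omega>), padd p (\<xi>1 \<omega>) (pmult p \<alpha> (\<xi>2 \<omega>))))
       = distr P borel (\<lambda>\<omega>. (padd p (\<xi>1 \<omega>) (\<xi>2 \<omega>), pneg p (padd p (\<xi>1 \<omega>) (pmult p \<alpha> (\<xi>2 \<omega>)))))"
proof -
  have p0: "p > 0" using p by (simp add: prime_gt_0_int)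
  define L1 where "L1 = (\<lambda>\<omega> n. (\<xi>1 \<omega> n + \<xi>2 \<omega> n) mod p ^ n)"
  define L2 where "L2 = (\<lambda>\<omega> n. (\<xi>1 \<omega> n + \<alpha> n * \<xi>2 \<omega> n) mod p ^ n)"
  define N2 where "N2 = (\<lambda>\<omega> n. (- (\<xi>1 \<omega> n + \<alpha> n * \<xi>2 \<omega> n)) mod p ^ n)"
  have L1_eq: "padd p (\<xi>1 \<omega>) (\<xi>2 \<omega>) = L1 \<omega>"
    and L2_eq: "padd p (\<xi>1 \<omega>) (pmult p \<alpha> (\<xi>2 \<omega>)) = L2 \<omega>"
    and N2_eq: "pneg p (L2 \<omega>) = N2 \<omega>" for \<omega>
    by (simp_all add: L1_def L2_def N2_def padd_def pmult_def pneg_def mod_add_right_eq mod_minus_eq)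
  have L1_Zp: "L1 \<omega> \<in> Zp p" and L2_Zp: "L2 \<omega> \<in> Zp p" and N2_Zp: "N2 \<omega> \<in> Zp p" if "\<omega> \<in> space P" for \<omega>
    using that r1 r2 pZp_subset_Zp[OF p0] \<alpha> unfolding L1_eq[symmetric] L2_eq[symmetric] N2_eq[symmetric]
    by (auto intro!: padd_Zp pmult_Zp pneg_Zp p0)
  have meas: "L1 \<in> borel_measurable P" "L2 \<in> borel_measurable P" "N2 \<in> borel_measurable P"
    unfolding L1_def L2_def N2_def
    by (rule borel_measurable_levelwise[OF m1 m2, where h = "\<lambda>n x y. (x + y) mod p ^ n"]
        borel_measurable_levelwise[OF m1 m2, where h = "\<lambda>n x y. (x + \<alpha> n * y) mod p ^ n"]
        borel_measurable_levelwise[OF m1 m2, where h = "\<lambda>n x y. (- (x + \<alpha> n * y)) mod p ^ n"])+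
  show ?thesis
    unfolding L1_eq L2_eq N2_eq
  proof (rule distr_pair_eq_if_distr_zip_eq[OF meas(1,2) meas(1,3)])
    show "distr P borel (\<lambda>\<omega> n. (L1 \<omega> n, L2 \<omega> n)) = distr P borel (\<lambda>\<omega> n. (L1 \<omega> n, N2 \<omega> n))"
    proof (rule distr_eq_if_level_distr_eq[OF P, where r = "\<lambda>j n (x, y). (x mod p ^ j, y mod p ^ j)"])
      show "(\<lambda>\<omega> n. (L1 \<omega> n, L2 \<omega> n)) \<in> borel_measurable P"
        and "(\<lambda>\<omega> n. (L1 \<omega> n, N2 \<omega> n)) \<in> borel_measurable P"
        unfolding L1_def L2_def N2_def
        by (rule borel_measurable_levelwise[OF m1 m2, where
              h = "\<lambda>n x y. ((x + y) mod p ^ n, (x + \<alpha> n * y) mod p ^ n)"]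
            borel_measurable_levelwise[OF m1 m2, where
              h = "\<lambda>n x y. ((x + y) mod p ^ n, (- (x + \<alpha> n * y)) mod p ^ n)"])+
      show "(L1 \<omega> j, L2 \<omega> j) = (case (L1 \<omega> n, L2 \<omega> n) of (x, y) \<Rightarrow> (x mod p ^ j, y mod p ^ j))"
        "(L1 \<omega> j, N2 \<omega> j) = (case (L1 \<omega> n, N2 \<omega> n) of (x, y) \<Rightarrow> (x mod p ^ j, y mod p ^ j))"
        if "\<omega> \<in> space P" "j \<le> n" for \<omega> j n
        using Zp_mod_power[OF L1_Zp[OF that(1)] that(2)] Zp_mod_power[OF L2_Zp[OF that(1)] that(2)]
          Zp_mod_power[OF N2_Zp[OF that(1)] that(2)] by simp_all
      show "distr P borel (\<lambda>\<omega>. (L1 \<omega> n, L2 \<omega> n)) = distr P borel (\<lambda>\<omega>. (L1 \<omega> n, N2 \<omega> n))" for n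
        unfolding L1_def L2_def N2_def
        by (rule haar_mixture_level_law_symmetric[OF p pZp_dvd[OF \<alpha>] P m1 m2 r1 r2 indep HD HpD \<mu>1 \<mu>2])
    qed
  qed
qed

theorem mainTheorem5:
  fixes p :: int and c :: "nat \<Rightarrow> int" and a :: real
    and P :: "'w measure" and \<xi>1 \<xi>2 :: "'w \<Rightarrow> (nat \<Rightarrow> int)"
    and mD mpD :: "(nat \<Rightarrow> int) measure"
  assumes "prime p" and "p > 2"
    and "c \<in> Zp_units p"
    and "0 < a" and "a < 1"
    and "prob_space P"
    and "\<xi>1 \<in> measurable P borel" and "\<xi>2 \<in> measurable P borel"
    and "\<forall>\<omega>\<in>space P. \<xi>1 \<omega> \<in> Zp p" and "\<forall>\<omega>\<in>space P. \<xi>2 \<omega> \<in> Zp p"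
    and "prob_space.indep_var P borel \<xi>1 borel \<xi>2"
    and "is_haar p (Zp p) mD" and "is_haar p (pZp p) mpD"
    and "\<forall>A\<in>sets borel. emeasure (distr P borel \<xi>1) A
           = ennreal a * emeasure mD A + ennreal (1 - a) * emeasure mpD A"
    and "distr P borel \<xi>2 = mD"
  shows "(let \<alpha> = pmult p (pconst p p) c;
              L1 = (\<lambda>\<omega>. padd p (\<xi>1 \<omega>) (\<xi>2 \<omega>));
              L2 = (\<lambda>\<omega>. padd p (\<xi>1 \<omega>) (pmult p \<alpha> (\<xi>2 \<omega>)))
          in distr P borel (\<lambda>\<omega>. (L1 \<omega>, L2 \<omega>))
             = distr P borel (\<lambda>\<omega>. (L1 \<omega>, pneg p (L2 \<omega>))))
         \<and> \<not> idempotent_distr p (distr P borel \<xi>1)"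
proof -
  have \<alpha>: "pmult p (pconst p p) c \<in> pZp p"
    using assms(3) by (auto simp: pZp_def Zp_units_def)
  have "p > 1" using assms(1) by (simp add: prime_gt_1_int)
  show ?thesis
    unfolding Let_def
    using haar_mixture_pair_law_symmetric[OF assms(1) \<alpha> assms(6-15)]
      haar_mixture_not_idempotent_distr[OF \<open>p > 1\<close> assms(4,5,12,13,14)]
    by blast
qed

end
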